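(* Let $\mathcal{M}\subseteq 2^N$ be a matroid on $N=[n]$. Let the elements have distinct nonnegative weights with $w(\{1\})>\dots>w(\{n\})$. Let $k$ satisfy the standing assumptions below, let $p\in[\varepsilon(k),1/2]$, and let $r$ be a positive integer with $r\ge(1+\varepsilon(pk))pk$. Let $X_1,\dots,X_n\sim\mathrm{Ber}(2p)$ and $Y_1,\dots,Y_n\sim\mathrm{Ber}(1/2)$ be mutually independent. Set $S=\{i:X_i=1,Y_i=1\}$ and $T=\{i:X_i=1,Y_i=0\}$. Let $T^*\subseteq T$ be the set of elements of $T$ that improve $S$ with respect to $\mathcal{M}^r$, and let $S^*=\mathrm{OPT}(S,\mathcal{M}^r)$. Then $\mathbb{E}[w(T^* )]=\mathbb{E}[w(S^* )]$.
   Context: Matroids are identified with their families of independent sets. $\mathcal{M}^r$ is the $r$-fold union of $\mathcal{M}$: the family of sets partitionable into $r$ members of $\mathcal{M}$. $w(S)=\sum_{i\in S}w(\{i\})$. $\mathrm{OPT}(S,\mathcal{M}')=\arg\max_{U\subseteq S,\,U\in\mathcal{M}'}w(U)$, which is unique since weights are distinct. An element $i$ improves $S$ with respect to $\mathcal{M}'$ if $i\in\mathrm{OPT}(S\cup\{i\},\mathcal{M}')$. Standing assumptions: $\varepsilon(x)=C\sqrt{\log(n)/x}$, where $C$ is a sufficiently large absolute constant (e.g. $C\in[10,20]$, such that $\log(1/\varepsilon(k))-2$ is a positive integer), and $160^2\log n\le k\le n$. *)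

theory Defs
  imports "HOL-Probability.Probability"
begin

definition matroid :: "nat \<Rightarrow> nat set set \<Rightarrow> bool" where
  "matroid n M \<longleftrightarrow>
     (\<forall>A\<in>M. A \<subseteq> {1..n}) \<and>
     {} \<in> M \<and>
     (\<forall>A B. A \<in> M \<and> B \<subseteq> A \<longrightarrow> B \<in> M) \<and>
     (\<forall>A B. A \<in> M \<and> B \<in> M \<and> card A < card B \<longrightarrow> (\<exists>x\<in>B - A. insert x A \<in> M))"

definition matroid_union_pow :: "nat set set \<Rightarrow> nat \<Rightarrow> nat set set" where
  "matroid_union_pow M r =
     {A. \<exists>P :: nat \<Rightarrow> nat set. (\<forall>j<r. P j \<in> M) \<and> disjoint_family_on P {..<r}
                                \<and> A = (\<Union>j<r. P j)}"

definition wset :: "(nat \<Rightarrow> real) \<Rightarrow> nat set \<Rightarrow> real" where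
  "wset w S = (\<Sum>i\<in>S. w i)"

text \<open>OPT(S, M'): the maximum-weight member of M' contained in S.  Ties (only possible
  through an element of weight 0) are broken in favour of the larger set.\<close>
definition OPT :: "(nat \<Rightarrow> real) \<Rightarrow> nat set \<Rightarrow> nat set set \<Rightarrow> nat set" where
  "OPT w S M' = (THE U. U \<subseteq> S \<and> U \<in> M' \<and>
       (\<forall>V. V \<subseteq> S \<and> V \<in> M' \<longrightarrow> wset w V \<le> wset w U) \<and>
       (\<forall>V. V \<subseteq> S \<and> V \<in> M' \<and> wset w V = wset w U \<longrightarrow> card V \<le> card U))"

definition improves :: "(nat \<Rightarrow> real) \<Rightarrow> nat \<Rightarrow> nat set \<Rightarrow> nat set set \<Rightarrow> bool" where
  "improves w i S M' \<longleftrightarrow> i \<in> OPT w (insert i S) M'"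

definition eps :: "real \<Rightarrow> nat \<Rightarrow> real \<Rightarrow> real" where
  "eps C n x = C * sqrt (ln (real n) / x)"

end

theory Submission
  imports Defs
begin

(* Flipping the coin Y i preserves the distribution of (X, Y), and when X i holds and Y i does not,
   it turns S into insert i S.  Hence i lies in T* with the same probability as in OPT(S), for every
   element i, and linearity of expectation gives the claim.  The only property of OPT needed is
   OPT(S) \<subseteq> S, i.e. that the maximiser is unique.  This holds because M^r is again a matroid
   (exchange along a partition of maximal overlap with a partition of the larger set), and two
   distinct optimal independent sets of equal size cannot exist in a matroid with injective weights:
   the heaviest element of their symmetric difference would allow an exchange raising the weight. *)

lemma matroid_subset: "matroid n M \<Longrightarrow> A \<in> M \<Longrightarrow> A \<subseteq> {1..n}"
  unfolding matroid_def by blast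

lemma matroid_finite: "matroid n M \<Longrightarrow> A \<in> M \<Longrightarrow> finite A"
  by (rule finite_subset[OF matroid_subset finite_atLeastAtMost])

lemma matroid_empty: "matroid n M \<Longrightarrow> {} \<in> M"
  unfolding matroid_def by blast

lemma matroid_downward_closed: "matroid n M \<Longrightarrow> A \<in> M \<Longrightarrow> B \<subseteq> A \<Longrightarrow> B \<in> M"
  unfolding matroid_def by blast

lemma matroid_augment:
  "matroid n M \<Longrightarrow> A \<in> M \<Longrightarrow> B \<in> M \<Longrightarrow> card A < card B \<Longrightarrow> \<exists>x\<in>B - A. insert x A \<in> M"
  unfolding matroid_def by blast

lemma matroid_augment_to_card:
  assumes M: "matroid n M" and "A \<in> M" "B \<in> M" "card A \<le> card B"
  shows "\<exists>C\<in>M. A \<subseteq> C \<and> C \<subseteq> A \<union> B \<and> card C = card B"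
  using assms(2-4)
proof (induction "card B - card A" arbitrary: A)
  case 0
  then show ?case by auto
next
  case (Suc d)
  then have "card A < card B"
    by linarith
  then obtain x where x: "x \<in> B - A" "insert x A \<in> M"
    using matroid_augment[OF M Suc.prems(1,2)] by blast
  have "card (insert x A) = Suc (card A)"
    using x matroid_finite[OF M \<open>A \<in> M\<close>] by simp
  then have "d = card B - card (insert x A)" "card (insert x A) \<le> card B"
    using Suc.hyps(2) by linarith+
  then obtain C where "C \<in> M" "insert x A \<subseteq> C" "C \<subseteq> insert x A \<union> B" "card C = card B"
    using Suc.hyps(1) Suc.prems(2) x(2) by blast
  then show ?case using x by blast
qed

definition union_partition :: "nat set set \<Rightarrow> nat \<Rightarrow> (nat \<Rightarrow> nat set) \<Rightarrow> nat set \<Rightarrow> bool" where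
  "union_partition M r P A \<longleftrightarrow>
     (\<forall>j<r. P j \<in> M) \<and> disjoint_family_on P {..<r} \<and> A = (\<Union>j<r. P j)"

lemma mem_matroid_union_pow: "A \<in> matroid_union_pow M r \<longleftrightarrow> (\<exists>P. union_partition M r P A)"
  unfolding matroid_union_pow_def union_partition_def by blast

lemma card_union_partition:
  assumes "matroid n M" "union_partition M r P A"
  shows "card A = (\<Sum>j<r. card (P j))"
proof -
  have P: "\<forall>j<r. P j \<in> M" "disjoint_family_on P {..<r}" "A = (\<Union>j<r. P j)"
    using assms(2) unfolding union_partition_def by blast+
  show ?thesis unfolding P(3)
    by (rule card_UN_disjoint) (use P matroid_finite[OF assms(1)] disjoint_family_onD[OF P(2)] in auto)
qed

lemma union_partition_insert:
  assumes "union_partition M r P A" "j < r" "x \<notin> A" "insert x (P j) \<in> M"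
  shows "union_partition M r (P(j := insert x (P j))) (insert x A)"
  using assms unfolding union_partition_def disjoint_family_on_def by auto

lemma union_partition_move:
  assumes M: "matroid n M" and P: "union_partition M r P A"
    and "j < r" "j' < r" "j \<noteq> j'" "x \<in> P j'" "insert x (P j) \<in> M"
  shows "union_partition M r (P(j := insert x (P j), j' := P j' - {x})) A"
proof -
  define P' where "P' = P(j := insert x (P j), j' := P j' - {x})"
  have PM: "\<forall>l<r. P l \<in> M" and disj: "disjoint_family_on P {..<r}" and A: "A = (\<Union>l<r. P l)"
    using P unfolding union_partition_def by blast+
  have x_only_j': "x \<notin> P l" if "l < r" "l \<noteq> j'" for l
    using disjoint_family_onD[OF disj] that assms(4,6) by blast
  have "\<forall>l<r. P' l \<in> M"
    using PM assms(4,7) matroid_downward_closed[OF M, of "P j'" "P j' - {x}"]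
    unfolding P'_def by auto
  moreover have "disjoint_family_on P' {..<r}"
    unfolding disjoint_family_on_def
  proof (intro ballI impI)
    fix l m assume lm: "l \<in> {..<r}" "m \<in> {..<r}" "l \<noteq> m"
    have "P' l \<subseteq> insert x (P l)" "P' m \<subseteq> insert x (P m)"
      unfolding P'_def by auto
    moreover have "P l \<inter> P m = {}"
      using disjoint_family_onD[OF disj] lm by blast
    moreover have "x \<notin> P' l \<or> x \<notin> P' m"
      using x_only_j' lm unfolding P'_def by auto
    ultimately show "P' l \<inter> P' m = {}"
      by blast
  qed
  moreover have "A = (\<Union>l<r. P' l)"
    using A assms(3-6) unfolding P'_def by auto
  ultimately show ?thesis unfolding union_partition_def P'_def[symmetric] by blast
qed

lemma matroid_union_pow_augment:
  assumes M: "matroid n M"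
    and I: "I \<in> matroid_union_pow M r" and J: "J \<in> matroid_union_pow M r"
    and card_less: "card I < card J"
  shows "\<exists>x\<in>J - I. insert x I \<in> matroid_union_pow M r"
proof -
  obtain Q where Q: "union_partition M r Q J"
    using J by (auto simp: mem_matroid_union_pow)
  define overlap where "overlap P = (\<Sum>j<r. card (P j \<inter> Q j))" for P
  have "overlap P < Suc (card J)" for P
  proof -
    have "overlap P \<le> (\<Sum>j<r. card (Q j))"
      unfolding overlap_def using Q matroid_finite[OF M]
      by (intro sum_mono card_mono) (auto simp: union_partition_def)
    then show ?thesis using card_union_partition[OF M Q] by simp
  qed
  moreover obtain P0 where "union_partition M r P0 I"
    using I by (auto simp: mem_matroid_union_pow)
  ultimately obtain P where P: "union_partition M r P I"
    and P_max: "\<And>P'. union_partition M r P' I \<Longrightarrow> overlap P' \<le> overlap P"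
    using ex_has_greatest_nat[of "\<lambda>P. union_partition M r P I" P0 overlap "Suc (card J)"]
    by blast
  obtain j where j: "j < r" "card (P j) < card (Q j)"
  proof (rule ccontr)
    assume "\<not> thesis"
    then have "(\<Sum>j<r. card (Q j)) \<le> (\<Sum>j<r. card (P j))"
      using that by (intro sum_mono) force
    then show False
      using card_less card_union_partition[OF M P] card_union_partition[OF M Q] by linarith
  qed
  have PM: "P j \<in> M" and QM: "Q j \<in> M"
    using P Q j(1) unfolding union_partition_def by blast+
  obtain x where x: "x \<in> Q j - P j" "insert x (P j) \<in> M"
    using matroid_augment[OF M PM QM j(2)] by blast
  have "x \<in> J"
    using Q x(1) j(1) unfolding union_partition_def by blast
  moreover have "x \<notin> I"
    \<comment> \<open>otherwise moving x from its block j' to block j would increase the overlap with Q\<close>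
  proof
    assume "x \<in> I"
    then obtain j' where j': "j' < r" "x \<in> P j'"
      using P unfolding union_partition_def by blast
    have "j \<noteq> j'"
      using j' x(1) by blast
    define P' where "P' = P(j := insert x (P j), j' := P j' - {x})"
    have P': "union_partition M r P' I"
      unfolding P'_def by (rule union_partition_move[OF M P j(1) j' (1) \<open>j \<noteq> j'\<close> j'(2) x(2)])
    have "Q j \<inter> Q j' = {}"
      using Q \<open>j \<noteq> j'\<close> j(1) j'(1) unfolding union_partition_def disjoint_family_on_def by blast
    then have "x \<notin> Q j'"
      using x(1) by blast
    have fin: "finite (P' l \<inter> Q l)" if "l < r" for l
      using Q that matroid_finite[OF M] unfolding union_partition_def by blast
    have "P l \<inter> Q l \<subseteq> P' l \<inter> Q l" for l
      using \<open>x \<notin> Q j'\<close> unfolding P'_def by auto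
    then have le: "\<forall>l\<in>{..<r}. card (P l \<inter> Q l) \<le> card (P' l \<inter> Q l)"
      using fin by (simp add: card_mono)
    have "P j \<inter> Q j \<subset> P' j \<inter> Q j"
      using \<open>j \<noteq> j'\<close> x(1) unfolding P'_def by auto
    then have "card (P j \<inter> Q j) < card (P' j \<inter> Q j)"
      using fin[OF j(1)] by (rule psubset_card_mono[rotated])
    then have "overlap P < overlap P'"
      unfolding overlap_def using le j(1) by (intro sum_strict_mono_ex1) auto
    then show False
      using P_max[OF P'] by simp
  qed
  ultimately show ?thesis
    using union_partition_insert[OF P j(1) _ x(2)] by (auto simp: mem_matroid_union_pow)
qed

lemma matroid_matroid_union_pow:
  assumes M: "matroid n M"
  shows "matroid n (matroid_union_pow M r)"
  unfolding matroid_def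
proof (intro conjI allI impI ballI)
  fix A assume "A \<in> matroid_union_pow M r"
  then obtain P where "union_partition M r P A"
    by (auto simp: mem_matroid_union_pow)
  then show "A \<subseteq> {1..n}"
    using matroid_subset[OF M] unfolding union_partition_def by blast
next
  have "union_partition M r (\<lambda>_. {}) {}"
    using matroid_empty[OF M] unfolding union_partition_def disjoint_family_on_def by simp
  then show "{} \<in> matroid_union_pow M r"
    by (auto simp: mem_matroid_union_pow)
next
  fix A B assume "A \<in> matroid_union_pow M r \<and> B \<subseteq> A"
  then obtain P where P: "union_partition M r P A" and "B \<subseteq> A"
    by (auto simp: mem_matroid_union_pow)
  have "\<forall>j<r. P j \<inter> B \<in> M"
    using P matroid_downward_closed[OF M, of _ "_ \<inter> B"] unfolding union_partition_def by blast
  moreover have "disjoint_family_on (\<lambda>j. P j \<inter> B) {..<r}"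
    using P unfolding union_partition_def disjoint_family_on_def by blast
  moreover have "B = (\<Union>j<r. P j \<inter> B)"
    using P \<open>B \<subseteq> A\<close> unfolding union_partition_def by blast
  ultimately have "union_partition M r (\<lambda>j. P j \<inter> B) B"
    unfolding union_partition_def by blast
  then show "B \<in> matroid_union_pow M r"
    by (auto simp: mem_matroid_union_pow)
next
  fix A B assume "A \<in> matroid_union_pow M r \<and> B \<in> matroid_union_pow M r \<and> card A < card B"
  then show "\<exists>x\<in>B - A. insert x A \<in> matroid_union_pow M r"
    using matroid_union_pow_augment[OF M] by blast
qed

definition is_OPT :: "(nat \<Rightarrow> real) \<Rightarrow> nat set \<Rightarrow> nat set set \<Rightarrow> nat set \<Rightarrow> bool" where
  "is_OPT w S F U \<longleftrightarrow> U \<subseteq> S \<and> U \<in> F \<and>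
     (\<forall>V. V \<subseteq> S \<and> V \<in> F \<longrightarrow> wset w V \<le> wset w U) \<and>
     (\<forall>V. V \<subseteq> S \<and> V \<in> F \<and> wset w V = wset w U \<longrightarrow> card V \<le> card U)"

lemma OPT_eq_The_is_OPT: "OPT w S F = (THE U. is_OPT w S F U)"
  unfolding OPT_def is_OPT_def ..

lemma is_OPT_exists:
  assumes "finite S" "{} \<in> F"
  shows "\<exists>U. is_OPT w S F U"
proof -
  define G where "G = {U. U \<subseteq> S \<and> U \<in> F}"
  have G: "finite G" "{} \<in> G"
    using assms unfolding G_def by (auto intro: finite_subset[of _ "Pow S"])
  define G' where "G' = {U\<in>G. wset w U = Max (wset w ` G)}"
  have "Max (wset w ` G) \<in> wset w ` G"
    using G by (intro Max_in) auto
  then have G': "finite G'" "G' \<noteq> {}"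
    using G unfolding G'_def by auto
  have "Max (card ` G') \<in> card ` G'"
    using G' by (intro Max_in) auto
  then obtain U where U: "U \<in> G'" "card U = Max (card ` G')"
    by auto
  have "is_OPT w S F U"
    using U G G' unfolding is_OPT_def G'_def G_def by auto
  then show ?thesis ..
qed

lemma heaviest_difference_mem_max_weight:
  assumes M: "matroid n M" and U: "U \<in> M" and V: "V \<in> M" and card_eq: "card U = card V"
    and inj: "inj_on w (U \<union> V)"
    and V_max: "\<And>C. C \<in> M \<Longrightarrow> C \<subseteq> U \<union> V \<Longrightarrow> wset w C \<le> wset w V"
    and e: "e \<in> U" and e_heaviest: "\<And>x. x \<in> (U - V) \<union> (V - U) \<Longrightarrow> w x \<le> w e"
  shows "e \<in> V"
proof (rule ccontr)
  assume "e \<notin> V"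
  \<comment> \<open>extending A within A \<union> V to the size of V swaps a single element f of V for the heavier e\<close>
  define A where "A = insert e {x\<in>U. w e < w x}"
  have "A \<subseteq> U"
    using e unfolding A_def by blast
  then have "A \<in> M" "card A \<le> card V"
    using matroid_downward_closed[OF M U] card_mono[OF matroid_finite[OF M U]] card_eq by auto
  then obtain C where C: "C \<in> M" "A \<subseteq> C" "C \<subseteq> A \<union> V" "card C = card V"
    using matroid_augment_to_card[OF M _ V] by blast
  have "{x\<in>U. w e < w x} \<subseteq> V"
    using e_heaviest by force
  then have C_sub: "C - {e} \<subseteq> V"
    using C(3) unfolding A_def by blast
  have "e \<in> C" "finite C" "finite V"
    using C(1,2) V matroid_finite[OF M] unfolding A_def by auto
  moreover have "card C > 0"
    using \<open>e \<in> C\<close> \<open>finite C\<close> by (auto simp: card_gt_0_iff)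
  ultimately have "card (V - (C - {e})) = 1"
    using C(4) card_Diff_subset[OF finite_subset[OF C_sub] C_sub] card_mono[OF \<open>finite V\<close> C_sub]
    by simp
  then obtain f where f: "V - (C - {e}) = {f}"
    by (rule card_1_singletonE)
  have "f \<in> V" "f \<notin> C"
    using f \<open>e \<notin> V\<close> by auto
  then have "f \<notin> A" "f \<noteq> e"
    using C(2) \<open>e \<in> C\<close> by auto
  then have "w f \<le> w e"
    using e_heaviest[of f] \<open>f \<in> V\<close> unfolding A_def by force
  moreover have "w f \<noteq> w e"
    using inj_onD[OF inj _ _] \<open>f \<noteq> e\<close> \<open>f \<in> V\<close> e by blast
  ultimately have "w f < w e"
    by simp
  have "C - {e} = V - {f}"
    using f C_sub by blast
  then have "wset w V < wset w C"
    using \<open>w f < w e\<close> sum.remove[OF \<open>finite V\<close> \<open>f \<in> V\<close>, of w]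
      sum.remove[OF \<open>finite C\<close> \<open>e \<in> C\<close>, of w]
    unfolding wset_def by simp
  moreover have "C \<subseteq> U \<union> V"
    using C(3) \<open>A \<subseteq> U\<close> by blast
  ultimately show False
    using V_max[OF C(1)] by simp
qed

lemma is_OPT_unique:
  assumes M: "matroid n M" and inj: "inj_on w S"
    and U: "is_OPT w S M U" and V: "is_OPT w S M V"
  shows "U = V"
proof (rule ccontr)
  assume "U \<noteq> V"
  have UV: "U \<in> M" "V \<in> M" "U \<union> V \<subseteq> S"
    using U V unfolding is_OPT_def by blast+
  have "wset w U = wset w V"
    using U V UV unfolding is_OPT_def by (meson order_antisym)
  then have "card U = card V"
    using U V UV unfolding is_OPT_def by (meson order_antisym)
  have U_max: "wset w C \<le> wset w U" and V_max: "wset w C \<le> wset w V"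
    if "C \<in> M" "C \<subseteq> U \<union> V" for C
    using U V UV(3) that subset_trans[OF that(2) UV(3)] unfolding is_OPT_def by blast+
  have inj_UV: "inj_on w (U \<union> V)"
    using inj_on_subset[OF inj UV(3)] .
  define D where "D = (U - V) \<union> (V - U)"
  have "finite D" "D \<noteq> {}"
    using \<open>U \<noteq> V\<close> matroid_finite[OF M] UV unfolding D_def by auto
  then have "Max (w ` D) \<in> w ` D"
    by (intro Max_in) auto
  then obtain e where e: "e \<in> D" "w e = Max (w ` D)"
    by auto
  then have e_heaviest: "w x \<le> w e" if "x \<in> D" for x
    using \<open>finite D\<close> that by simp
  show False
  proof (cases "e \<in> U")
    case True
    then have "e \<in> V"
      using heaviest_difference_mem_max_weight[OF M UV(1,2) \<open>card U = card V\<close> inj_UV V_max]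
        e_heaviest unfolding D_def by blast
    then show False
      using e(1) True unfolding D_def by blast
  next
    case False
    then have "e \<in> V"
      using e(1) unfolding D_def by blast
    then have "e \<in> U"
      using heaviest_difference_mem_max_weight[OF M UV(2,1) \<open>card U = card V\<close>[symmetric]]
        inj_UV U_max e_heaviest unfolding D_def by (simp add: Un_commute)
    then show False
      using False by blast
  qed
qed

lemma OPT_subset:
  assumes "matroid n M" "finite S" "inj_on w S"
  shows "OPT w S M \<subseteq> S"
proof -
  have "\<exists>!U. is_OPT w S M U"
    using is_OPT_exists[OF assms(2) matroid_empty[OF assms(1)]] is_OPT_unique[OF assms(1,3)] by blast
  then have "is_OPT w S M (OPT w S M)"
    unfolding OPT_eq_The_is_OPT by (rule theI')
  then show ?thesis
    unfolding is_OPT_def by blast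
qed

lemma map_pmf_flip_Pi_pmf_fair_coin:
  fixes I :: "'a set"
  assumes "finite I" "i \<in> I"
  shows "map_pmf (\<lambda>Y. Y(i := \<not> Y i)) (Pi_pmf I False (\<lambda>_. bernoulli_pmf (1/2)))
       = Pi_pmf I False (\<lambda>_. bernoulli_pmf (1/2))"
    (is "map_pmf ?flip ?Q = ?Q")
proof (rule pmf_eqI)
  fix Y :: "'a \<Rightarrow> bool"
  have involution: "?flip (?flip Y') = Y'" for Y'
    by simp
  then have "inj ?flip"
    by (intro injI) (metis involution)
  have "pmf (map_pmf ?flip ?Q) Y = pmf (map_pmf ?flip ?Q) (?flip (?flip Y))"
    by (simp only: involution)
  also have "\<dots> = pmf ?Q (?flip Y)"
    by (rule pmf_map_inj'[OF \<open>inj ?flip\<close>])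
  also have "\<dots> = pmf ?Q Y"
  proof -
    have "(\<forall>x. x \<notin> I \<longrightarrow> ?flip Y x = False) \<longleftrightarrow> (\<forall>x. x \<notin> I \<longrightarrow> Y x = False)"
      using assms(2) by auto
    then show ?thesis
      by (simp only: pmf_Pi[OF assms(1)] pmf_bernoulli_half)
  qed
  finally show "pmf (map_pmf ?flip ?Q) Y = pmf ?Q Y" .
qed

lemma expectation_wset_eq_sum_prob:
  fixes D :: "'a pmf" and A :: "'a \<Rightarrow> nat set"
  assumes "finite I" "\<And>z. A z \<subseteq> I"
  shows "measure_pmf.expectation D (\<lambda>z. wset w (A z))
       = (\<Sum>i\<in>I. w i * measure_pmf.prob D {z. i \<in> A z})"
proof -
  have "wset w (A z) = (\<Sum>i\<in>I. if i \<in> A z then w i else 0)" for z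
    using sum.inter_restrict[OF assms(1), of w "A z"] Int_absorb1[OF assms(2)]
    unfolding wset_def by simp
  also have "\<dots> z = (\<Sum>i\<in>I. w i * indicator {z. i \<in> A z} z)" for z
    by (rule sum.cong) auto
  finally have "measure_pmf.expectation D (\<lambda>z. wset w (A z))
      = measure_pmf.expectation D (\<lambda>z. \<Sum>i\<in>I. w i * indicator {z. i \<in> A z} z)"
    by simp
  also have "\<dots> = (\<Sum>i\<in>I. measure_pmf.expectation D (\<lambda>z. w i * indicator {z. i \<in> A z} z))"
    by (intro Bochner_Integration.integral_sum integrable_mult_right integrable_real_indicator)
      (auto simp: measure_pmf.emeasure_finite less_top[symmetric])
  finally show ?thesis
    by simp
qed

lemma expectation_improving_eq_expectation_selected:
  fixes P :: "(nat \<Rightarrow> bool) pmf" and sel :: "nat set \<Rightarrow> nat set"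
  assumes I: "finite I" and sel: "\<And>A. A \<subseteq> I \<Longrightarrow> sel A \<subseteq> A"
  defines "D \<equiv> pair_pmf P (Pi_pmf I False (\<lambda>_. bernoulli_pmf (1/2)))"
  shows "measure_pmf.expectation D
           (\<lambda>(X, Y). wset w {i\<in>{i\<in>I. X i \<and> \<not> Y i}. i \<in> sel (insert i {i\<in>I. X i \<and> Y i})})
       = measure_pmf.expectation D (\<lambda>(X, Y). wset w (sel {i\<in>I. X i \<and> Y i}))"
proof -
  define S where "S z = {i\<in>I. fst z i \<and> snd z i}" for z :: "(nat \<Rightarrow> bool) \<times> (nat \<Rightarrow> bool)"
  define T where "T z = {i\<in>{i\<in>I. fst z i \<and> \<not> snd z i}. i \<in> sel (insert i (S z))}" for z
  have sel_S: "sel (S z) \<subseteq> S z" for z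
    by (rule sel) (auto simp: S_def)
  have T_sub: "T z \<subseteq> I" for z
    unfolding T_def by blast
  have sel_S_sub: "sel (S z) \<subseteq> I" for z
    using sel_S[of z] unfolding S_def by blast
  have prob_eq: "measure_pmf.prob D {z. i \<in> T z} = measure_pmf.prob D {z. i \<in> sel (S z)}"
    if "i \<in> I" for i
  proof -
    define flip :: "(nat \<Rightarrow> bool) \<times> (nat \<Rightarrow> bool) \<Rightarrow> (nat \<Rightarrow> bool) \<times> (nat \<Rightarrow> bool)"
      where "flip = apsnd (\<lambda>Y. Y(i := \<not> Y i))"
    have "map_pmf flip D = D"
      unfolding D_def flip_def
      by (simp only: pair_map_pmf2[symmetric] map_pmf_flip_Pi_pmf_fair_coin[OF I that])
    have "i \<in> sel (S (X, Y(i := \<not> Y i))) \<longleftrightarrow> i \<in> T (X, Y)" for X Y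
    proof (cases "X i \<and> \<not> Y i")
      case True
      then have "S (X, Y(i := \<not> Y i)) = insert i (S (X, Y))"
        using that unfolding S_def by auto
      then show ?thesis
        using True \<open>i \<in> I\<close> unfolding T_def by simp
    next
      case False
      then have "i \<notin> S (X, Y(i := \<not> Y i))"
        unfolding S_def by auto
      then show ?thesis
        using False sel_S[of "(X, Y(i := \<not> Y i))"] unfolding T_def by auto
    qed
    then have "flip -` {z. i \<in> sel (S z)} = {z. i \<in> T z}"
      unfolding flip_def by auto
    then show ?thesis
      using measure_map_pmf[of flip D "{z. i \<in> sel (S z)}"] \<open>map_pmf flip D = D\<close> by simp
  qed
  have "measure_pmf.expectation D (\<lambda>z. wset w (T z))
      = (\<Sum>i\<in>I. w i * measure_pmf.prob D {z. i \<in> T z})"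
    by (rule expectation_wset_eq_sum_prob[OF I T_sub])
  also have "\<dots> = (\<Sum>i\<in>I. w i * measure_pmf.prob D {z. i \<in> sel (S z)})"
    by (rule sum.cong) (simp_all add: prob_eq)
  also have "\<dots> = measure_pmf.expectation D (\<lambda>z. wset w (sel (S z)))"
    by (rule expectation_wset_eq_sum_prob[OF I sel_S_sub, symmetric])
  finally show ?thesis
    unfolding case_prod_unfold T_def S_def .
qed

theorem lemma3:
  fixes n k r :: nat and M :: "nat set set" and w :: "nat \<Rightarrow> real" and p C :: real
  assumes "matroid n M"
    and "\<forall>i\<in>{1..n}. w i \<ge> 0"
    and "\<forall>i j. 1 \<le> i \<and> i < j \<and> j \<le> n \<longrightarrow> w i > w j"
    and "10 \<le> C" and "C \<le> 20"
    and "\<exists>m::nat. m > 0 \<and> ln (1 / eps C n (real k)) - 2 = real m"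
    and "160^2 * ln (real n) \<le> real k" and "k \<le> n"
    and "eps C n (real k) \<le> p" and "p \<le> 1/2"
    and "r > 0" and "real r \<ge> (1 + eps C n (p * real k)) * (p * real k)"
  shows
    "let D = pair_pmf (Pi_pmf {1..n} False (\<lambda>_. bernoulli_pmf (2 * p)))
                      (Pi_pmf {1..n} False (\<lambda>_. bernoulli_pmf (1/2)));
         Mr = matroid_union_pow M r;
         S = (\<lambda>X Y. {i\<in>{1..n}. X i \<and> Y i});
         T = (\<lambda>X Y. {i\<in>{1..n}. X i \<and> \<not> Y i});
         Tstar = (\<lambda>X Y. {i\<in>T X Y. improves w i (S X Y) Mr});
         Sstar = (\<lambda>X Y. OPT w (S X Y) Mr)
     in measure_pmf.expectation D (\<lambda>(X, Y). wset w (Tstar X Y))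
        = measure_pmf.expectation D (\<lambda>(X, Y). wset w (Sstar X Y))"
proof -
  let ?Mr = "matroid_union_pow M r"
  have Mr: "matroid n ?Mr"
    using assms(1) by (rule matroid_matroid_union_pow)
  have inj: "inj_on w {1..n}"
  proof (rule linorder_inj_onI')
    fix i j assume "i \<in> {1..n}" "j \<in> {1..n}" "i < j"
    then have "w j < w i"
      using assms(3) by simp
    then show "w i \<noteq> w j"
      by simp
  qed
  have "OPT w A ?Mr \<subseteq> A" if "A \<subseteq> {1..n}" for A
    using OPT_subset[OF Mr finite_subset[OF that] inj_on_subset[OF inj that]] by simp
  then show ?thesis
    unfolding Let_def improves_def
    by (rule expectation_improving_eq_expectation_selected
        [OF finite_atLeastAtMost, where sel = "\<lambda>A. OPT w A ?Mr"])
qed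

end
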